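(* Let $a\in\mathbb Z$ and let $b$ be a positive even integer with $2+a(b-1)<0$. Then the polynomial $r_{a,b}(X)=1+aX+aX^2+\dots+aX^{b-1}+X^b$ is a reciprocal Salem polynomial.
   Context: A polynomial $f=f_0+\dots+f_nX^n$ ($f_n\ne0$) is reciprocal if $f_i=f_{n-i}$ for all $i$. A Salem polynomial is a monic $f\in\mathbb Z[X]$ having exactly one root $\lambda$ with $|\lambda|>1$, this root being simple. *)

theory Defs
  imports Complex_Main "HOL-Computational_Algebra.Polynomial"
begin

definition reciprocal :: "'a::zero poly \<Rightarrow> bool" where
  "reciprocal f \<longleftrightarrow> f \<noteq> 0 \<and> (\<forall>i\<le>degree f. coeff f i = coeff f (degree f - i))"

definition salem_poly :: "int poly \<Rightarrow> bool" where
  "salem_poly f \<longleftrightarrow> lead_coeff f = 1 \<and>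
     (\<exists>l. poly (map_poly complex_of_int f) l = 0 \<and> cmod l > 1 \<and>
          order l (map_poly complex_of_int f) = 1 \<and>
          (\<forall>m. poly (map_poly complex_of_int f) m = 0 \<and> cmod m > 1 \<longrightarrow> m = l))"

definition r_poly :: "int \<Rightarrow> nat \<Rightarrow> int poly" where
  "r_poly a b = 1 + (\<Sum>i\<in>{1..<b}. monom a i) + monom 1 b"

end

theory Submission
  imports Defs
begin

text \<open>Write b = 2k. Telescoping gives (z - 1) r(z) = z^(2k+1) + c z^(2k) - c z - 1 with c = a - 1,
  and at z = e^(i\<theta>) this is 2i e^(i(2k+1)\<theta>/2) times the real function
  sin((2k+1)\<theta>/2) + c sin((2k-1)\<theta>/2). Since c < 0, that function alternates in sign at the
  points 2j\<pi>/(2k+1), j = 1..k, so it has k - 1 zeros in (0, \<pi>); with their negatives they give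
  2k - 2 distinct roots of r on the unit circle. As r(1) = 2 + a(b - 1) < 0, r also has a real
  root l > 1, and by reciprocity 1/l is a root. These are b distinct roots, so they are all the
  roots and all are simple, and l is the only one outside the closed unit disc.\<close>

lemma card_roots_eq_degree:
  fixes p :: "'a::idom poly"
  assumes "p \<noteq> 0" and "finite S" and "S \<subseteq> {x. poly p x = 0}" and "card S = degree p"
  shows roots_eq_if_card_roots_eq_degree: "{x. poly p x = 0} = S"
    and order_eq_1_if_card_roots_eq_degree: "x \<in> S \<Longrightarrow> order x p = 1"
proof -
  let ?Z = "{x. poly p x = 0}"
  have fin: "finite ?Z" using assms(1) by (rule poly_roots_finite)
  have pos: "1 \<le> order x p" if "x \<in> ?Z" for x
    using that assms(1) by (simp add: order_root Suc_le_eq)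
  have sum_le_card: "(\<Sum>x\<in>?Z. order x p) \<le> card S" using sum_order_le_degree[OF assms(1)] assms(4) by simp
  also have card_le: "card S \<le> card ?Z" using fin assms(3) by (rule card_mono)
  finally have sum_le: "(\<Sum>x\<in>?Z. order x p) \<le> (\<Sum>x\<in>?Z. 1)" by simp
  have "(\<Sum>x\<in>?Z. 1) \<le> (\<Sum>x\<in>?Z. order x p)" using pos by (intro sum_mono) auto
  with sum_le_card card_le have "card ?Z = card S" by simp
  then show "?Z = S" using fin assms(3) by (metis card_subset_eq)
  have "order x p = 1" if "x \<in> ?Z" for x
  proof (rule ccontr)
    assume "order x p \<noteq> 1"
    then have "(\<Sum>x\<in>?Z. 1) < (\<Sum>x\<in>?Z. order x p)"
      using that pos fin by (intro sum_strict_mono_ex1) (auto intro!: bexI[of _ x] simp: le_neq_implies_less)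
    with sum_le show False by simp
  qed
  then show "x \<in> S \<Longrightarrow> order x p = 1" using assms(3) by blast
qed

lemma reciprocal_map_poly:
  assumes "inj f" and "f 0 = 0"
  shows "reciprocal (map_poly f p) \<longleftrightarrow> reciprocal p"
proof -
  have nz: "f x \<noteq> 0" if "x \<noteq> 0" for x
    using assms that by (metis injD)
  have deg: "degree (map_poly f p) = degree p"
    using nz by (rule degree_map_poly)
  have zero: "map_poly f p = 0 \<longleftrightarrow> p = 0"
    using nz by (intro map_poly_eq_0_iff assms(2))
  have coeff: "coeff (map_poly f p) i = coeff (map_poly f p) j \<longleftrightarrow> coeff p i = coeff p j" for i j
    using assms by (simp add: coeff_map_poly inj_eq)
  show ?thesis unfolding reciprocal_def deg zero coeff ..
qed

lemma reflect_poly_eq_if_reciprocal: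
  assumes "reciprocal p"
  shows "reflect_poly p = p"
proof (rule poly_eqI)
  fix n
  show "coeff (reflect_poly p) n = coeff p n"
  proof (cases "n \<le> degree p")
    case True
    then have "coeff p n = coeff p (degree p - n)" using assms unfolding reciprocal_def by blast
    then show ?thesis using True by (simp add: coeff_reflect_poly)
  qed (simp add: coeff_reflect_poly coeff_eq_0)
qed

lemma poly_inverse_root_if_reciprocal:
  fixes p :: "'a::field poly"
  assumes "reciprocal p" and "poly p x = 0"
  shows "poly p (inverse x) = 0"
proof (cases "x = 0")
  case False
  then have "poly (reflect_poly p) (inverse x) = 0"
    using assms(2) by (simp add: poly_reflect_poly_nz)
  then show ?thesis using assms(1) by (simp add: reflect_poly_eq_if_reciprocal)
qed (use assms(2) in simp)

lemma salem_poly_if_card_roots_eq_degree: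
  fixes p :: "int poly" and S :: "complex set"
  assumes "lead_coeff p = 1" and "finite S" and "card S = degree p"
    and "S \<subseteq> {z. poly (map_poly of_int p) z = 0}"
    and "\<alpha> \<in> S" and "1 < cmod \<alpha>" and "\<And>z. z \<in> S \<Longrightarrow> z \<noteq> \<alpha> \<Longrightarrow> cmod z \<le> 1"
  shows "salem_poly p"
proof -
  let ?P = "map_poly complex_of_int p"
  have "degree ?P = degree p" by (simp add: degree_map_poly)
  moreover from this have "lead_coeff ?P = 1" using assms(1) by (simp add: coeff_map_poly)
  ultimately have "?P \<noteq> 0" "finite S" "S \<subseteq> {z. poly ?P z = 0}" "card S = degree ?P"
    using assms(2-4) by (auto simp del: coeff_map_poly)
  note card_eq = this
  have "order \<alpha> ?P = 1" using card_eq assms(5) by (rule order_eq_1_if_card_roots_eq_degree)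
  moreover have "poly ?P \<alpha> = 0" using assms(4,5) by blast
  moreover have "m = \<alpha>" if "poly ?P m = 0" and "1 < cmod m" for m
  proof -
    have "m \<in> S" using that(1) roots_eq_if_card_roots_eq_degree[OF card_eq] by blast
    then show ?thesis using that(2) assms(7) by force
  qed
  ultimately show ?thesis unfolding salem_poly_def using assms(1,6) by blast
qed

lemma poly_of_int_inverse_root_if_reciprocal:
  fixes x :: "'a::{field,ring_char_0}"
  assumes "reciprocal p" and "poly (map_poly of_int p) x = 0"
  shows "poly (map_poly of_int p) (inverse x) = 0"
proof -
  have "inj (of_int :: int \<Rightarrow> 'a)" by (simp add: inj_def)
  then have "reciprocal (map_poly (of_int :: int \<Rightarrow> 'a) p)"
    using assms(1) by (simp add: reciprocal_map_poly)
  then show ?thesis using assms(2) by (rule poly_inverse_root_if_reciprocal)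
qed

lemma inj_on_cis: "inj_on cis {-pi<..pi}"
proof (rule inj_onI)
  fix x y assume "x \<in> {-pi<..pi}" "y \<in> {-pi<..pi}" "cis x = cis y"
  then show "x = y" by (metis cis_Arg_unique greaterThanAtMost_iff sgn_cis)
qed

lemma sign_changes_imp_zeros:
  fixes f :: "real \<Rightarrow> real" and p :: "nat \<Rightarrow> real"
  assumes "strict_mono p" and "continuous_on {p m..p n} f"
    and "\<And>j. m \<le> j \<Longrightarrow> j < n \<Longrightarrow> f (p j) * f (p (Suc j)) < 0"
  obtains t where "strict_mono_on {m..<n} t"
    and "\<And>j. m \<le> j \<Longrightarrow> j < n \<Longrightarrow> p j < t j \<and> t j < p (Suc j) \<and> f (t j) = 0"
proof -
  have "\<exists>s. p j < s \<and> s < p (Suc j) \<and> f s = 0" if j: "m \<le> j" "j < n" for j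
  proof -
    have "{p j..p (Suc j)} \<subseteq> {p m..p n}"
      using assms(1) j by (auto simp: strict_mono_less_eq)
    then have cont: "continuous_on {p j..p (Suc j)} f"
      using assms(2) continuous_on_subset by blast
    have le: "p j \<le> p (Suc j)" using assms(1) by (simp add: strict_mono_less_eq)
    have sign: "f (p j) * f (p (Suc j)) < 0" using assms(3) j .
    have "\<exists>s. p j \<le> s \<and> s \<le> p (Suc j) \<and> f s = 0"
    proof (cases "f (p j) < 0")
      case True
      then have "0 < f (p (Suc j))" using sign by (simp add: mult_less_0_iff)
      then show ?thesis using IVT'[of f "p j" 0 "p (Suc j)"] True le cont by simp
    next
      case False
      then have "f (p (Suc j)) < 0" using sign by (simp add: mult_less_0_iff)
      then show ?thesis using IVT2'[of f "p (Suc j)" 0 "p j"] False le cont by simp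
    qed
    moreover have "f (p j) \<noteq> 0" "f (p (Suc j)) \<noteq> 0" using sign by auto
    ultimately show ?thesis by (metis order.order_iff_strict)
  qed
  then obtain t where t: "\<And>j. m \<le> j \<Longrightarrow> j < n \<Longrightarrow> p j < t j \<and> t j < p (Suc j) \<and> f (t j) = 0"
    by metis
  have mono: "strict_mono_on {m..<n} t"
  proof (rule strict_mono_onI)
    fix i j assume "i \<in> {m..<n}" "j \<in> {m..<n}" "i < j"
    then have "t i < p (Suc i)" "p (Suc i) \<le> p j" "p j < t j"
      using t assms(1) by (auto simp: strict_mono_less_eq)
    then show "t i < t j" by linarith
  qed
  show ?thesis using that[OF mono t] .
qed

lemma coeff_r_poly:
  "0 < b \<Longrightarrow> coeff (r_poly a b) i = (if i = 0 \<or> i = b then 1 else if i < b then a else 0)"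
  unfolding r_poly_def by (auto simp: coeff_sum coeff_monom)

lemma degree_r_poly: "0 < b \<Longrightarrow> degree (r_poly a b) = b"
  by (rule antisym) (auto intro: degree_le le_degree simp: coeff_r_poly)

lemma lead_coeff_r_poly: "0 < b \<Longrightarrow> lead_coeff (r_poly a b) = 1"
  by (simp add: degree_r_poly coeff_r_poly)

lemma reciprocal_r_poly:
  assumes "0 < b"
  shows "reciprocal (r_poly a b)"
proof -
  have "r_poly a b \<noteq> 0" using lead_coeff_r_poly[OF assms, of a] by auto
  then show ?thesis using assms by (auto simp: reciprocal_def degree_r_poly coeff_r_poly)
qed

lemma poly_r_poly:
  fixes z :: "'a::comm_ring_1"
  assumes "0 < b"
  shows "poly (map_poly of_int (r_poly a b)) z = 1 + of_int a * (\<Sum>i\<in>{1..<b}. z ^ i) + z ^ b"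
proof -
  have "map_poly of_int (r_poly a b) = 1 + (\<Sum>i\<in>{1..<b}. monom (of_int a) i) + monom (1::'a) b"
    using assms by (intro poly_eqI) (auto simp: coeff_map_poly coeff_r_poly coeff_sum coeff_monom)
  then show ?thesis by (simp add: poly_sum poly_monom sum_distrib_left)
qed

lemma telescope_sum_powers:
  fixes z :: "'a::comm_ring_1"
  assumes "1 \<le> n"
  shows "(z - 1) * (\<Sum>i\<in>{1..<n}. z ^ i) = z ^ n - z"
  using assms by (induction n rule: dec_induct) (simp_all add: algebra_simps)

lemma poly_r_poly_telescoped:
  fixes z :: "'a::comm_ring_1"
  assumes "0 < b"
  shows "(z - 1) * poly (map_poly of_int (r_poly a b)) z
           = z ^ (b + 1) + (of_int a - 1) * z ^ b - (of_int a - 1) * z - 1"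
proof -
  have "(z - 1) * poly (map_poly of_int (r_poly a b)) z
          = (z - 1) + of_int a * ((z - 1) * (\<Sum>i\<in>{1..<b}. z ^ i)) + (z - 1) * z ^ b"
    using assms by (simp add: poly_r_poly distrib_left mult.left_commute)
  also have "(z - 1) * (\<Sum>i\<in>{1..<b}. z ^ i) = z ^ b - z"
    using assms by (intro telescope_sum_powers) simp
  finally show ?thesis by (simp add: algebra_simps)
qed

lemma r_poly_real_root_gt_1:
  assumes "0 < b" and "2 + a * (int b - 1) < 0"
  obtains l :: real where "1 < l" and "poly (map_poly complex_of_int (r_poly a b)) (of_real l) = 0"
proof -
  let ?f = "poly (map_poly real_of_int (r_poly a b))"
  define M where "M = 1 - real_of_int a"
    \<comment> \<open>chosen so that the telescoped form of r collapses to M^2 - 1 at M\<close>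
  have "a < 0"
  proof (rule ccontr)
    assume "\<not> a < 0"
    then have "0 \<le> a * (int b - 1)" using assms(1) by simp
    then show False using assms(2) by linarith
  qed
  then have M: "1 < M" by (simp add: M_def)
  have "?f 1 = real_of_int (2 + a * (int b - 1))"
    using assms(1) by (simp add: poly_r_poly of_nat_diff)
  then have neg: "?f 1 < 0" using assms(2) by linarith
  have "(M - 1) * ?f M = M\<^sup>2 - 1"
    using poly_r_poly_telescoped[OF assms(1), of M a] by (simp add: M_def algebra_simps power2_eq_square)
  moreover have "1 < M\<^sup>2" using M by (simp add: one_less_power)
  ultimately have "0 < (M - 1) * ?f M" by simp
  then have pos: "0 < ?f M" using M by (simp add: zero_less_mult_iff)
  obtain l where "1 < l" "?f l = 0" using poly_IVT_pos[OF M neg pos] by auto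
  moreover have "poly (map_poly complex_of_int (r_poly a b)) (of_real l) = of_real (?f l)"
    by (simp add: poly_r_poly[OF assms(1)])
  ultimately show ?thesis using that by simp
qed

definition sine_factor :: "real \<Rightarrow> nat \<Rightarrow> real \<Rightarrow> real" where
  "sine_factor c k \<theta> = sin ((2 * real k + 1) * \<theta> / 2) + c * sin ((2 * real k - 1) * \<theta> / 2)"

lemma sine_factor_minus: "sine_factor c k (- \<theta>) = - sine_factor c k \<theta>"
  by (simp add: sine_factor_def)

lemma continuous_on_sine_factor: "continuous_on A (sine_factor c k)"
  unfolding sine_factor_def by (intro continuous_intros) auto

lemma cis_minus_cis: "cis x - cis (- x) = 2 * \<i> * complex_of_real (sin x)"
  by (simp add: complex_eq_iff)

lemma cis_polynomial_eq_sine_factor: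
  "cis \<theta> ^ (2 * k + 1) + of_real c * cis \<theta> ^ (2 * k) - of_real c * cis \<theta> - 1
     = 2 * \<i> * cis ((2 * real k + 1) * \<theta> / 2) * of_real (sine_factor c k \<theta>)"
proof -
  define A where "A = (2 * real k + 1) * \<theta> / 2"
  define B where "B = (2 * real k - 1) * \<theta> / 2"
  have angles: "A + A = real (2 * k + 1) * \<theta>" "A + B = real (2 * k) * \<theta>" "A - B = \<theta>"
    unfolding A_def B_def by (simp_all add: field_simps)
  have "2 * \<i> * cis A * of_real (sine_factor c k \<theta>)
          = cis A * (cis A - cis (- A)) + of_real c * (cis A * (cis B - cis (- B)))"
    unfolding sine_factor_def A_def B_def cis_minus_cis by (simp add: algebra_simps)
  also have "\<dots> = cis (A + A) - cis (A - A) + of_real c * (cis (A + B) - cis (A - B))"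
    by (simp add: right_diff_distrib cis_mult)
  also have "\<dots> = cis (real (2 * k + 1) * \<theta>) - 1 + of_real c * (cis (real (2 * k) * \<theta>) - cis \<theta>)"
    unfolding angles by simp
  finally have "2 * \<i> * cis A * of_real (sine_factor c k \<theta>)
      = cis (real (2 * k + 1) * \<theta>) - 1 + of_real c * (cis (real (2 * k) * \<theta>) - cis \<theta>)" .
  then show ?thesis unfolding DeMoivre A_def[symmetric] by (simp add: algebra_simps)
qed

lemma poly_r_poly_cis_eq_0:
  assumes "b = 2 * k" and "0 < k" and "sine_factor (of_int a - 1) k \<theta> = 0" and "sin \<theta> \<noteq> 0"
  shows "poly (map_poly complex_of_int (r_poly a b)) (cis \<theta>) = 0"
proof -
  have "(cis \<theta> - 1) * poly (map_poly complex_of_int (r_poly a b)) (cis \<theta>) = 0"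
    using poly_r_poly_telescoped[of b "cis \<theta>" a] cis_polynomial_eq_sine_factor[of \<theta> k "of_int a - 1"] assms(1-3)
    by simp
  moreover have "cis \<theta> \<noteq> 1" using assms(4) by (auto simp: complex_eq_iff)
  ultimately show ?thesis by simp
qed

lemma sine_factor_at_sample_point:
  "sine_factor c k (2 * real j * pi / (2 * real k + 1))
           = - c * (-1) ^ j * sin (2 * real j * pi / (2 * real k + 1))"
proof -
  define \<theta> where "\<theta> = 2 * real j * pi / (2 * real k + 1)"
  have angles: "(2 * real k + 1) * \<theta> / 2 = real j * pi" "(2 * real k - 1) * \<theta> / 2 = real j * pi - \<theta>"
    unfolding \<theta>_def by (simp_all add: field_simps)
  have "sine_factor c k \<theta> = - c * (-1) ^ j * sin \<theta>"
    unfolding sine_factor_def angles by (simp add: sin_diff)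
  then show ?thesis by (simp add: \<theta>_def)
qed

lemma sine_factor_zeros:
  assumes "c < 0"
  obtains t where "strict_mono_on {1..<k} t"
    and "\<And>j. j \<in> {1..<k} \<Longrightarrow> 0 < t j \<and> t j < pi \<and> sine_factor c k (t j) = 0"
proof -
  define p where "p j = 2 * real j * pi / (2 * real k + 1)" for j
  have "strict_mono p" by (rule strict_monoI) (simp add: p_def divide_strict_right_mono)
  have p_bounds: "0 < p j \<and> p j < pi" if "1 \<le> j" "j \<le> k" for j
  proof -
    have "2 * real j * pi < (2 * real k + 1) * pi"
      using that by (intro mult_strict_right_mono) auto
    then show ?thesis using that by (simp add: p_def divide_less_eq)
  qed
  have "sine_factor c k (p j) * sine_factor c k (p (Suc j)) < 0" if "1 \<le> j" "j < k" for j
  proof -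
    have "0 < sin (p j)" "0 < sin (p (Suc j))"
      using p_bounds that by (simp_all add: sin_gt_zero)
    moreover have "sine_factor c k (p j) * sine_factor c k (p (Suc j))
                     = - (c\<^sup>2 * sin (p j) * sin (p (Suc j)))"
      unfolding p_def sine_factor_at_sample_point by (simp add: power2_eq_square)
    ultimately show ?thesis using assms by simp
  qed
  then obtain t where mono: "strict_mono_on {1..<k} t"
    and t: "\<And>j. 1 \<le> j \<Longrightarrow> j < k \<Longrightarrow> p j < t j \<and> t j < p (Suc j) \<and> sine_factor c k (t j) = 0"
    using sign_changes_imp_zeros[OF \<open>strict_mono p\<close> continuous_on_sine_factor, of 1 k] by blast
  have "0 < t j \<and> t j < pi \<and> sine_factor c k (t j) = 0" if "j \<in> {1..<k}" for j
    using t[of j] p_bounds[of j] p_bounds[of "Suc j"] that by auto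
  with mono show ?thesis using that by blast
qed

lemma r_poly_unimodular_roots:
  assumes "b = 2 * k" and "0 < k" and "a \<le> 0"
  obtains U where "finite U" and "card U = b - 2"
    and "\<And>z. z \<in> U \<Longrightarrow> cmod z = 1 \<and> poly (map_poly complex_of_int (r_poly a b)) z = 0"
proof -
  obtain t where mono: "strict_mono_on {1..<k} t"
    and t: "\<And>j. j \<in> {1..<k} \<Longrightarrow> 0 < t j \<and> t j < pi \<and> sine_factor (of_int a - 1) k (t j) = 0"
    using sine_factor_zeros[of "of_int a - 1" k] assms(3) by auto
  define T where "T = t ` {1..<k}"
  define \<Theta> where "\<Theta> = T \<union> uminus ` T"
  have T: "T \<subseteq> {0<..<pi}" using t by (auto simp: T_def)
  have "card T = k - 1"
    unfolding T_def using strict_mono_on_imp_inj_on[OF mono] by (simp add: card_image)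
  moreover have "card (uminus ` T) = card T" by (simp add: card_image)
  moreover have "T \<inter> uminus ` T = {}"
  proof (intro equals0I)
    fix x assume "x \<in> T \<inter> uminus ` T"
    then have "0 < x" "0 < - x" using T by auto
    then show False by simp
  qed
  ultimately have card_\<Theta>: "card \<Theta> = b - 2"
    unfolding \<Theta>_def using assms(1) by (simp add: card_Un_disjoint T_def)
  have "\<Theta> \<subseteq> {-pi<..pi}" using T by (auto simp: \<Theta>_def)
  then have "inj_on cis \<Theta>" by (rule inj_on_subset[OF inj_on_cis])
  have root: "sine_factor (of_int a - 1) k \<theta> = 0 \<and> sin \<theta> \<noteq> 0" if "\<theta> \<in> \<Theta>" for \<theta>
  proof -
    have "sine_factor (of_int a - 1) k \<theta> = 0 \<and> 0 < sin \<theta>" if "\<theta> \<in> T" for \<theta>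
      using that t by (auto simp: T_def sin_gt_zero)
    then show ?thesis using that by (fastforce simp: \<Theta>_def sine_factor_minus)
  qed
  show ?thesis
  proof (rule that[of "cis ` \<Theta>"])
    show "finite (cis ` \<Theta>)" by (simp add: \<Theta>_def T_def)
    show "card (cis ` \<Theta>) = b - 2" using card_image[OF \<open>inj_on cis \<Theta>\<close>] card_\<Theta> by simp
    show "cmod z = 1 \<and> poly (map_poly complex_of_int (r_poly a b)) z = 0" if "z \<in> cis ` \<Theta>" for z
      using that root poly_r_poly_cis_eq_0[OF assms(1,2)] by auto
  qed
qed

theorem lemma2:
  fixes a :: int and b :: nat
  assumes "b > 0" and "even b" and "2 + a * (int b - 1) < 0"
  shows "reciprocal (r_poly a b) \<and> salem_poly (r_poly a b)"
proof -
  obtain k where k: "b = 2 * k" "0 < k" using assms(1,2) by auto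
  have "a \<le> 0" using assms(1,3) mult_nonneg_nonneg[of a "int b - 1"] by linarith
  let ?R = "map_poly complex_of_int (r_poly a b)"
  obtain l where l: "1 < l" "poly ?R (of_real l) = 0"
    using r_poly_real_root_gt_1[OF assms(1,3)] .
  have inv_l: "poly ?R (inverse (of_real l)) = 0"
    using reciprocal_r_poly[OF assms(1)] l(2) by (rule poly_of_int_inverse_root_if_reciprocal)
  obtain U where U: "finite U" "card U = b - 2" "\<And>z. z \<in> U \<Longrightarrow> cmod z = 1 \<and> poly ?R z = 0"
    using r_poly_unimodular_roots[OF k \<open>a \<le> 0\<close>] by blast
  define S where "S = insert (of_real l) (insert (inverse (of_real l)) U)"
  have norms: "1 < cmod (of_real l)" "cmod (inverse (of_real l)) < 1"
    using l(1) by (simp_all add: norm_inverse inverse_less_1_iff)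
  then have "of_real l \<notin> insert (inverse (of_real l)) U" "inverse (of_real l) \<notin> U"
    using U(3) by fastforce+
  then have "finite S" "card S = degree (r_poly a b)"
    using U(1,2) k by (simp_all add: S_def degree_r_poly)
  moreover have "S \<subseteq> {z. poly ?R z = 0}" using U(3) l(2) inv_l by (auto simp: S_def)
  moreover have "cmod z \<le> 1" if "z \<in> S" "z \<noteq> of_real l" for z
    using that norms(2) U(3) by (auto simp: S_def)
  ultimately have "salem_poly (r_poly a b)"
    using lead_coeff_r_poly[OF assms(1)] norms(1)
    by (intro salem_poly_if_card_roots_eq_degree[where \<alpha> = "of_real l"]) (auto simp: S_def)
  with reciprocal_r_poly[OF assms(1)] show ?thesis by blast
qed

end
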